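(* Let $\mathbf{M}^*\in\mathbb{R}^{d_1\times d_2}$ have rank $r$, and let $f(\mathbf{U},\mathbf{V})=\frac12\|\mathbf{U}\mathbf{V}^\top-\mathbf{M}^*\|_F^2$ for $\mathbf{U}\in\mathbb{R}^{d_1\times r}$, $\mathbf{V}\in\mathbb{R}^{d_2\times r}$. Let $0<\epsilon<\|\mathbf{M}^*\|_F$ and $d=\max\{d_1,d_2\}$. Suppose the entries of $\mathbf{U}_0$ and $\mathbf{V}_0$ are drawn i.i.d. from $\mathcal{N}(0,\frac{\epsilon}{\mathrm{poly}(d)})$ (with a sufficiently large polynomial in $d$), and run gradient descent $$\mathbf{U}_{t+1}=\mathbf{U}_t-\eta_t(\mathbf{U}_t\mathbf{V}_t^\top-\mathbf{M}^* )\mathbf{V}_t,\qquad \mathbf{V}_{t+1}=\mathbf{V}_t-\eta_t(\mathbf{U}_t\mathbf{V}_t^\top-\mathbf{M}^* )^\top\mathbf{U}_t$$ with step sizes $\eta_t=\frac{\sqrt{\epsilon/r}}{100(t+1)\|\mathbf{M}^*\|_F^{3/2}}$, $t=0,1,\dots$. Then with high probability over the initialization $(\mathbf{U}_0,\mathbf{V}_0)$, for all $t$: (i) $\|\mathbf{U}_t^\top\mathbf{U}_t-\mathbf{V}_t^\top\mathbf{V}_t\|_F\le\epsilon$; (ii) $f(\mathbf{U}_t,\mathbf{V}_t)\le f(\mathbf{U}_{t-1},\mathbf{V}_{t-1})\le\cdots\le f(\mathbf{U}_0,\mathbf{V}_0)\le 2\|\mathbf{M}^*\|_F^2$; (iii)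 $\|\mathbf{U}_t\|_F^2\le 5\sqrt{r}\|\mathbf{M}^*\|_F$ and $\|\mathbf{V}_t\|_F^2\le 5\sqrt{r}\|\mathbf{M}^*\|_F$.
   Context: $\|\cdot\|_F$ is the Frobenius norm. *)

theory Defs
  imports "HOL-Probability.Probability" "Jordan_Normal_Form.DL_Rank"
begin

definition fro_norm :: "real mat \<Rightarrow> real" where
  "fro_norm A = sqrt (\<Sum>i<dim_row A. \<Sum>j<dim_col A. (A $$ (i, j))\<^sup>2)"

definition mf_obj :: "real mat \<Rightarrow> real mat \<Rightarrow> real mat \<Rightarrow> real" where
  "mf_obj M U V = (fro_norm (U * transpose_mat V - M))\<^sup>2 / 2"

definition mf_step :: "real mat \<Rightarrow> nat \<Rightarrow> real \<Rightarrow> nat \<Rightarrow> real" where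
  "mf_step M r \<epsilon> t = sqrt (\<epsilon> / real r) / (100 * real (t + 1) * fro_norm M powr (3/2))"

fun mf_gd :: "real mat \<Rightarrow> nat \<Rightarrow> real \<Rightarrow> real mat \<Rightarrow> real mat \<Rightarrow> nat \<Rightarrow> real mat \<times> real mat" where
  "mf_gd M r \<epsilon> U0 V0 0 = (U0, V0)"
| "mf_gd M r \<epsilon> U0 V0 (Suc t) =
     (let (U, V) = mf_gd M r \<epsilon> U0 V0 t; \<eta> = mf_step M r \<epsilon> t; R = U * transpose_mat V - M
      in (U - \<eta> \<cdot>\<^sub>m (R * V), V - \<eta> \<cdot>\<^sub>m (transpose_mat R * U)))"

text \<open>Initialization sample space: all entries of U0 (indices Inl (i,j), i<d1, j<r) and of
  V0 (indices Inr (i,j), i<d2, j<r), i.i.d. N(0, sigma^2) (sigma = standard deviation).\<close>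
definition init_index :: "nat \<Rightarrow> nat \<Rightarrow> nat \<Rightarrow> ((nat \<times> nat) + (nat \<times> nat)) set" where
  "init_index d1 d2 r = Inl ` ({..<d1} \<times> {..<r}) \<union> Inr ` ({..<d2} \<times> {..<r})"

definition gauss_init :: "nat \<Rightarrow> nat \<Rightarrow> nat \<Rightarrow> real \<Rightarrow> ((nat \<times> nat) + (nat \<times> nat) \<Rightarrow> real) measure" where
  "gauss_init d1 d2 r \<sigma> = PiM (init_index d1 d2 r) (\<lambda>_. density lborel (normal_density 0 \<sigma>))"

definition init_U :: "nat \<Rightarrow> nat \<Rightarrow> ((nat \<times> nat) + (nat \<times> nat) \<Rightarrow> real) \<Rightarrow> real mat" where
  "init_U d1 r \<omega> = mat d1 r (\<lambda>(i, j). \<omega> (Inl (i, j)))"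

definition init_V :: "nat \<Rightarrow> nat \<Rightarrow> ((nat \<times> nat) + (nat \<times> nat) \<Rightarrow> real) \<Rightarrow> real mat" where
  "init_V d2 r \<omega> = mat d2 r (\<lambda>(i, j). \<omega> (Inr (i, j)))"

end

theory Submission
  imports Defs
begin

text \<open>
  Write \<open>R = UV\<^sup>T - M\<close> for the residual and \<open>D = U\<^sup>TU - V\<^sup>TV\<close> for the imbalance, and
  \<open>P = RV\<close>, \<open>Q = R\<^sup>TU\<close> for the gradient. In one step the first-order terms of \<open>D\<close> cancel, so
  \<open>\<parallel>D\<parallel>\<close> grows by at most \<open>\<eta>\<^sup>2\<parallel>R\<parallel>\<^sup>2(\<parallel>U\<parallel>\<^sup>2 + \<parallel>V\<parallel>\<^sup>2)\<close>, which is summable for \<open>\<eta>\<^sub>t \<sim> 1/(t+1)\<close>.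
  The new residual is \<open>R - \<eta>X + \<eta>\<^sup>2Y\<close> with \<open>\<langle>R, X\<rangle> = \<parallel>P\<parallel>\<^sup>2 + \<parallel>Q\<parallel>\<^sup>2\<close>, so \<open>\<parallel>R\<parallel>\<close> does not grow
  as long as \<open>\<eta>(\<parallel>U\<parallel>\<^sup>2 + \<parallel>V\<parallel>\<^sup>2)\<close> and \<open>\<eta>\<parallel>R\<parallel>\<close> are small. Both follow from the invariant
  \<open>\<parallel>R\<^sub>t\<parallel> \<le> 2\<parallel>M\<parallel>\<close>, \<open>\<parallel>D\<^sub>t\<parallel> \<le> \<parallel>M\<parallel>\<close>, because a nearly balanced pair is bounded by its product:
  \<open>\<parallel>U\<parallel>\<^sup>2 \<le> \<surd>r \<parallel>U\<^sup>TU\<parallel> \<le> \<surd>r (\<parallel>UV\<^sup>T\<parallel> + \<parallel>D\<parallel>)\<close>. The invariant holds at time 0 whenever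
  \<open>\<parallel>U\<^sub>0\<parallel>\<^sup>2 + \<parallel>V\<^sub>0\<parallel>\<^sup>2 \<le> \<epsilon>/4\<close>, and Markov's inequality for the sum of the squared Gaussian
  entries gives this with probability at least \<open>1 - 1/d\<close>.
\<close>

section \<open>Frobenius inner product and norm\<close>

definition fro_inner :: "real mat \<Rightarrow> real mat \<Rightarrow> real" where
  "fro_inner A B = (\<Sum>i<dim_row A. \<Sum>j<dim_col A. A $$ (i, j) * B $$ (i, j))"

lemma index_mult_mat_sum:
  fixes A B :: "real mat"
  assumes "i < dim_row A" "j < dim_col B" "dim_col A = dim_row B"
  shows "(A * B) $$ (i, j) = (\<Sum>k<dim_row B. A $$ (i, k) * B $$ (k, j))"
  using assms by (auto simp: scalar_prod_def atLeast0LessThan intro!: sum.cong)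

lemma index_transpose_mult_mat_sum:
  fixes A B :: "real mat"
  assumes "A \<in> carrier_mat n k" "B \<in> carrier_mat n m" "i < k" "j < m"
  shows "(transpose_mat A * B) $$ (i, j) = (\<Sum>l<n. A $$ (l, i) * B $$ (l, j))"
  using assms by (subst index_mult_mat_sum) auto

lemma index_mult_transpose_mat_sum:
  fixes A B :: "real mat"
  assumes "A \<in> carrier_mat n k" "B \<in> carrier_mat m k" "i < n" "j < m"
  shows "(A * transpose_mat B) $$ (i, j) = (\<Sum>l<k. A $$ (i, l) * B $$ (j, l))"
  using assms by (subst index_mult_mat_sum) auto

lemma fro_norm_L2_set:
  "fro_norm A = L2_set (\<lambda>(i, j). A $$ (i, j)) ({..<dim_row A} \<times> {..<dim_col A})"
  unfolding fro_norm_def L2_set_def by (simp add: sum.cartesian_product case_prod_beta)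

lemma fro_norm_nonneg: "fro_norm A \<ge> 0"
  unfolding fro_norm_def by (auto intro!: sum_nonneg)

lemma power2_fro_norm: "(fro_norm A)\<^sup>2 = fro_inner A A"
  unfolding fro_norm_def fro_inner_def by (simp add: sum_nonneg power2_eq_square)

lemma fro_inner_commute: "B \<in> carrier_mat (dim_row A) (dim_col A) \<Longrightarrow> fro_inner A B = fro_inner B A"
  unfolding fro_inner_def by (auto simp: mult.commute)

lemma fro_inner_add_right:
  "B \<in> carrier_mat (dim_row A) (dim_col A) \<Longrightarrow> C \<in> carrier_mat (dim_row A) (dim_col A) \<Longrightarrow>
   fro_inner A (B + C) = fro_inner A B + fro_inner A C"
  unfolding fro_inner_def by (simp add: distrib_left sum.distrib)

lemma fro_inner_le:
  assumes "B \<in> carrier_mat (dim_row A) (dim_col A)"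
  shows "fro_inner A B \<le> fro_norm A * fro_norm B"
proof -
  let ?S = "{..<dim_row A} \<times> {..<dim_col A}"
  have "fro_inner A B = (\<Sum>x\<in>?S. A $$ x * B $$ x)"
    unfolding fro_inner_def by (simp add: sum.cartesian_product case_prod_beta)
  also have "\<dots> \<le> (\<Sum>x\<in>?S. \<bar>A $$ x\<bar> * \<bar>B $$ x\<bar>)"
    by (intro sum_mono) (metis abs_ge_self abs_mult)
  also have "\<dots> \<le> L2_set (\<lambda>x. A $$ x) ?S * L2_set (\<lambda>x. B $$ x) ?S"
    by (rule L2_set_mult_ineq)
  also have "\<dots> = fro_norm A * fro_norm B"
    using assms by (simp add: fro_norm_L2_set case_prod_beta)
  finally show ?thesis .
qed

lemma fro_norm_add_le:
  assumes "B \<in> carrier_mat (dim_row A) (dim_col A)"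
  shows "fro_norm (A + B) \<le> fro_norm A + fro_norm B"
proof -
  let ?S = "{..<dim_row A} \<times> {..<dim_col A}"
  have "fro_norm (A + B) = L2_set (\<lambda>x. A $$ x + B $$ x) ?S"
    using assms by (auto simp: fro_norm_L2_set case_prod_beta intro!: L2_set_cong)
  also have "\<dots> \<le> L2_set (\<lambda>x. A $$ x) ?S + L2_set (\<lambda>x. B $$ x) ?S"
    by (rule L2_set_triangle_ineq)
  also have "\<dots> = fro_norm A + fro_norm B"
    using assms by (simp add: fro_norm_L2_set case_prod_beta)
  finally show ?thesis .
qed

lemma fro_norm_smult: "fro_norm (c \<cdot>\<^sub>m A) = \<bar>c\<bar> * fro_norm A"
  unfolding fro_norm_def
  by (simp add: power_mult_distrib sum_distrib_left[symmetric] real_sqrt_mult)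

lemma fro_norm_diff_le:
  assumes "B \<in> carrier_mat (dim_row A) (dim_col A)"
  shows "fro_norm (A - B) \<le> fro_norm A + fro_norm B"
proof -
  have "A - B = A + (-1) \<cdot>\<^sub>m B" using assms by (auto intro!: eq_matI)
  then show ?thesis using fro_norm_add_le[of "(-1) \<cdot>\<^sub>m B" A] assms by (simp add: fro_norm_smult)
qed

lemma fro_norm_diff_commute:
  "B \<in> carrier_mat (dim_row A) (dim_col A) \<Longrightarrow> fro_norm (A - B) = fro_norm (B - A)"
  unfolding fro_norm_def by (simp add: power2_commute)

lemma fro_norm_transpose: "fro_norm (transpose_mat A) = fro_norm A"
  unfolding fro_norm_def by (simp, subst sum.swap, simp)

lemma fro_norm_mult_le:
  assumes "dim_col A = dim_row B"
  shows "fro_norm (A * B) \<le> fro_norm A * fro_norm B"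
proof -
  have "(fro_norm (A * B))\<^sup>2
      = (\<Sum>i<dim_row A. \<Sum>j<dim_col B. (\<Sum>k<dim_row B. A $$ (i, k) * B $$ (k, j))\<^sup>2)"
    unfolding fro_norm_def using assms
    by (simp add: sum_nonneg index_mult_mat_sum del: index_mult_mat(1))
  also have "\<dots> \<le> (\<Sum>i<dim_row A. \<Sum>j<dim_col B.
      (\<Sum>k<dim_row B. (A $$ (i, k))\<^sup>2) * (\<Sum>k<dim_row B. (B $$ (k, j))\<^sup>2))"
    by (intro sum_mono Cauchy_Schwarz_ineq_sum)
  also have "\<dots> = (\<Sum>i<dim_row A. \<Sum>k<dim_col A. (A $$ (i, k))\<^sup>2)
      * (\<Sum>j<dim_col B. \<Sum>k<dim_row B. (B $$ (k, j))\<^sup>2)"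
    unfolding sum_product assms ..
  also have "\<dots> = (fro_norm A * fro_norm B)\<^sup>2"
    unfolding fro_norm_def power_mult_distrib
    by (simp add: sum_nonneg, subst (2) sum.swap, simp)
  finally show ?thesis
    by (meson fro_norm_nonneg mult_nonneg_nonneg power2_le_imp_le)
qed

lemma fro_norm_mult_transpose_le:
  "dim_col A = dim_col B \<Longrightarrow> fro_norm (A * transpose_mat B) \<le> fro_norm A * fro_norm B"
  using fro_norm_mult_le[of A "transpose_mat B"] by (simp add: fro_norm_transpose)

lemma fro_norm_transpose_mult_le:
  "dim_row A = dim_row B \<Longrightarrow> fro_norm (transpose_mat A * B) \<le> fro_norm A * fro_norm B"
  using fro_norm_mult_le[of "transpose_mat A" B] by (simp add: fro_norm_transpose)

lemma fro_norm_gram_le: "fro_norm (transpose_mat A * A) \<le> (fro_norm A)\<^sup>2"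
  using fro_norm_transpose_mult_le[of A A] by (simp add: power2_eq_square)

lemma fro_norm_mult_transpose_commute:
  assumes "U \<in> carrier_mat n r" "V \<in> carrier_mat p r"
  shows "fro_norm (V * transpose_mat U) = fro_norm (U * transpose_mat V)"
proof -
  have "transpose_mat (U * transpose_mat V) = V * transpose_mat U"
    using assms by (simp add: transpose_mult[of U n r "transpose_mat V" p])
  then show ?thesis by (metis fro_norm_transpose)
qed

lemma fro_norm_pos_imp_dims_pos:
  "M \<in> carrier_mat d1 d2 \<Longrightarrow> fro_norm M > 0 \<Longrightarrow> 0 < d1 \<and> 0 < d2"
  unfolding fro_norm_def by (cases "d1 = 0"; cases "d2 = 0") auto

lemma power2_fro_norm_add_smult:
  "B \<in> carrier_mat (dim_row A) (dim_col A) \<Longrightarrow>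
   (fro_norm (A + c \<cdot>\<^sub>m B))\<^sup>2 = (fro_norm A)\<^sup>2 + 2 * c * fro_inner A B + c\<^sup>2 * (fro_norm B)\<^sup>2"
  unfolding power2_fro_norm fro_inner_def
  by (simp add: power2_eq_square algebra_simps sum.distrib sum_distrib_left)

lemma power2_fro_norm_diff_smult:
  "B \<in> carrier_mat (dim_row A) (dim_col A) \<Longrightarrow>
   (fro_norm (A - c \<cdot>\<^sub>m B))\<^sup>2 = (fro_norm A)\<^sup>2 - 2 * c * fro_inner A B + c\<^sup>2 * (fro_norm B)\<^sup>2"
  unfolding power2_fro_norm fro_inner_def
  by (simp add: power2_eq_square algebra_simps sum_subtractf sum.distrib sum_distrib_left)

lemma fro_inner_mult_left_adjoint:
  fixes A B C :: "real mat"
  assumes "A \<in> carrier_mat n m" "B \<in> carrier_mat n k" "C \<in> carrier_mat k m"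
  shows "fro_inner A (B * C) = fro_inner (transpose_mat B * A) C"
proof -
  have "fro_inner A (B * C) = (\<Sum>i<n. \<Sum>j<m. \<Sum>l<k. A $$ (i, j) * B $$ (i, l) * C $$ (l, j))"
    using assms unfolding fro_inner_def
    by (simp add: index_mult_mat_sum sum_distrib_left mult_ac del: index_mult_mat(1))
  also have "\<dots> = (\<Sum>l<k. \<Sum>j<m. \<Sum>i<n. A $$ (i, j) * B $$ (i, l) * C $$ (l, j))"
    by (subst sum.swap, subst (2) sum.swap, simp add: sum.swap[of _ "{..<m}"])
  also have "\<dots> = fro_inner (transpose_mat B * A) C"
    using assms unfolding fro_inner_def
    by (simp add: index_mult_mat_sum sum_distrib_left mult_ac del: index_mult_mat(1))
  finally show ?thesis .
qed

lemma fro_inner_mult_right_adjoint: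
  fixes A B C :: "real mat"
  assumes "A \<in> carrier_mat n m" "B \<in> carrier_mat n k" "C \<in> carrier_mat k m"
  shows "fro_inner A (B * C) = fro_inner (A * transpose_mat C) B"
proof -
  have "fro_inner A (B * C) = (\<Sum>i<n. \<Sum>j<m. \<Sum>l<k. A $$ (i, j) * B $$ (i, l) * C $$ (l, j))"
    using assms unfolding fro_inner_def
    by (simp add: index_mult_mat_sum sum_distrib_left mult_ac del: index_mult_mat(1))
  also have "\<dots> = (\<Sum>i<n. \<Sum>l<k. \<Sum>j<m. A $$ (i, j) * B $$ (i, l) * C $$ (l, j))"
    by (simp add: sum.swap[of _ "{..<m}"])
  also have "\<dots> = fro_inner (A * transpose_mat C) B"
    using assms unfolding fro_inner_def
    by (simp add: index_mult_mat_sum sum_distrib_left mult_ac del: index_mult_mat(1))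
  finally show ?thesis .
qed

text \<open>The trace of \<open>U\<^sup>TU\<close> is \<open>\<parallel>U\<parallel>\<^sup>2\<close>, and by Cauchy-Schwarz the trace of an \<open>r \<times> r\<close> matrix
  is at most \<open>\<surd>r\<close> times its Frobenius norm.\<close>
lemma power2_fro_norm_le_sqrt_gram:
  fixes U :: "real mat"
  assumes U: "U \<in> carrier_mat n r"
  shows "(fro_norm U)\<^sup>2 \<le> sqrt (real r) * fro_norm (transpose_mat U * U)"
proof -
  define A where "A = transpose_mat U * U"
  have A: "A \<in> carrier_mat r r" unfolding A_def using U by auto
  have "(fro_norm U)\<^sup>2 = (\<Sum>i<n. \<Sum>j<r. (U $$ (i, j))\<^sup>2)"
    using U unfolding fro_norm_def by (simp add: sum_nonneg)
  also have "\<dots> = (\<Sum>j<r. \<Sum>i<n. (U $$ (i, j))\<^sup>2)" by (rule sum.swap)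
  also have "\<dots> = (\<Sum>j<r. A $$ (j, j))"
    unfolding A_def using U
    by (intro sum.cong refl) (simp add: index_transpose_mult_mat_sum[OF U U] power2_eq_square del: index_mult_mat(1))
  finally have trace: "(fro_norm U)\<^sup>2 = (\<Sum>j<r. A $$ (j, j))" .
  have diag: "(\<Sum>j<r. (A $$ (j, j))\<^sup>2) \<le> (fro_norm A)\<^sup>2"
  proof -
    have "(\<Sum>i<r. (A $$ (i, i))\<^sup>2) \<le> (\<Sum>i<r. \<Sum>j<r. (A $$ (i, j))\<^sup>2)"
      by (intro sum_mono member_le_sum) auto
    then show ?thesis using A unfolding fro_norm_def by (simp add: sum_nonneg)
  qed
  have "((fro_norm U)\<^sup>2)\<^sup>2 \<le> (\<Sum>j<r. (A $$ (j, j))\<^sup>2) * real r"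
    unfolding trace using sum_squared_le_sum_of_squares[of "\<lambda>j. A $$ (j, j)" "{..<r}"] by simp
  also have "\<dots> \<le> (fro_norm A)\<^sup>2 * real r" using diag by (rule mult_right_mono) simp
  also have "\<dots> = (sqrt (real r) * fro_norm A)\<^sup>2" by (simp add: power_mult_distrib)
  finally show ?thesis
    unfolding A_def[symmetric] by (rule power2_le_imp_le) (simp add: fro_norm_nonneg)
qed

section \<open>One step of gradient descent\<close>

definition residual :: "real mat \<Rightarrow> real mat \<Rightarrow> real mat \<Rightarrow> real mat" where
  "residual M U V = U * transpose_mat V - M"

definition imbalance :: "real mat \<Rightarrow> real mat \<Rightarrow> real mat" where
  "imbalance U V = transpose_mat U * U - transpose_mat V * V"

definition gd_update :: "real mat \<Rightarrow> real \<Rightarrow> real mat \<Rightarrow> real mat \<Rightarrow> real mat \<times> real mat" where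
  "gd_update M \<eta> U V =
     (U - \<eta> \<cdot>\<^sub>m (residual M U V * V), V - \<eta> \<cdot>\<^sub>m (transpose_mat (residual M U V) * U))"

lemma mf_obj_residual: "mf_obj M U V = (fro_norm (residual M U V))\<^sup>2 / 2"
  unfolding mf_obj_def residual_def ..

lemma mf_gd_Suc_gd_update:
  "mf_gd M r \<epsilon> U0 V0 (Suc t) =
   gd_update M (mf_step M r \<epsilon> t) (fst (mf_gd M r \<epsilon> U0 V0 t)) (snd (mf_gd M r \<epsilon> U0 V0 t))"
  by (simp add: gd_update_def residual_def Let_def split: prod.split)

lemma gd_update_carrier:
  assumes "U \<in> carrier_mat n k" "V \<in> carrier_mat m k" "M \<in> carrier_mat n m"
  shows "fst (gd_update M \<eta> U V) \<in> carrier_mat n k" "snd (gd_update M \<eta> U V) \<in> carrier_mat m k"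
  using assms by (auto simp: gd_update_def residual_def)

lemma mf_gd_carrier:
  assumes "U0 \<in> carrier_mat d1 r" "V0 \<in> carrier_mat d2 r" "M \<in> carrier_mat d1 d2"
  shows "fst (mf_gd M r \<epsilon> U0 V0 t) \<in> carrier_mat d1 r \<and> snd (mf_gd M r \<epsilon> U0 V0 t) \<in> carrier_mat d2 r"
  by (induction t) (use assms gd_update_carrier in \<open>auto simp: mf_gd_Suc_gd_update simp del: mf_gd.simps(2)\<close>)

lemma fro_norm_residual_le:
  assumes "U \<in> carrier_mat d1 r" "V \<in> carrier_mat d2 r" "M \<in> carrier_mat d1 d2"
  shows "fro_norm (residual M U V) \<le> fro_norm M + ((fro_norm U)\<^sup>2 + (fro_norm V)\<^sup>2) / 2"
proof -
  have "fro_norm (residual M U V) \<le> fro_norm U * fro_norm V + fro_norm M"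
    using fro_norm_diff_le[of M "U * transpose_mat V"] fro_norm_mult_transpose_le[of U V] assms
    by (auto simp: residual_def)
  moreover have "2 * (fro_norm U * fro_norm V) \<le> (fro_norm U)\<^sup>2 + (fro_norm V)\<^sup>2"
    using zero_le_power2[of "fro_norm U - fro_norm V"] by (simp add: power2_eq_square algebra_simps)
  ultimately show ?thesis unfolding add_divide_distrib by linarith
qed

lemma fro_norm_imbalance_le:
  assumes "U \<in> carrier_mat d1 r" "V \<in> carrier_mat d2 r"
  shows "fro_norm (imbalance U V) \<le> (fro_norm U)\<^sup>2 + (fro_norm V)\<^sup>2"
  using fro_norm_diff_le[of "transpose_mat V * V" "transpose_mat U * U"] fro_norm_gram_le[of U]
    fro_norm_gram_le[of V] assms
  unfolding imbalance_def by auto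

lemma residual_diff_smult:
  fixes U V P Q M :: "real mat"
  assumes "U \<in> carrier_mat n k" "V \<in> carrier_mat m k" "P \<in> carrier_mat n k" "Q \<in> carrier_mat m k"
    "M \<in> carrier_mat n m"
  shows "residual M (U - \<eta> \<cdot>\<^sub>m P) (V - \<eta> \<cdot>\<^sub>m Q)
     = (residual M U V - \<eta> \<cdot>\<^sub>m (P * transpose_mat V + U * transpose_mat Q)) + \<eta>\<^sup>2 \<cdot>\<^sub>m (P * transpose_mat Q)"
proof -
  have "U - \<eta> \<cdot>\<^sub>m P \<in> carrier_mat n k" "V - \<eta> \<cdot>\<^sub>m Q \<in> carrier_mat m k" using assms by auto
  then show ?thesis using assms unfolding residual_def
    by (intro eq_matI)
      (auto simp: index_mult_transpose_mat_sum[of _ n k _ m] sum_subtractf sum.distrib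
        sum_distrib_left algebra_simps power2_eq_square simp del: index_mult_mat(1))
qed

lemma imbalance_diff_smult:
  fixes U V P Q :: "real mat"
  assumes carrier: "U \<in> carrier_mat n k" "V \<in> carrier_mat m k" "P \<in> carrier_mat n k" "Q \<in> carrier_mat m k"
    and cross: "transpose_mat P * U = transpose_mat V * Q" "transpose_mat U * P = transpose_mat Q * V"
  shows "imbalance (U - \<eta> \<cdot>\<^sub>m P) (V - \<eta> \<cdot>\<^sub>m Q) = imbalance U V + \<eta>\<^sup>2 \<cdot>\<^sub>m imbalance P Q"
proof (rule eq_matI)
  fix i j assume "i < dim_row (imbalance U V + \<eta>\<^sup>2 \<cdot>\<^sub>m imbalance P Q)"
    "j < dim_col (imbalance U V + \<eta>\<^sup>2 \<cdot>\<^sub>m imbalance P Q)"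
  then have ij: "i < k" "j < k" using carrier by (auto simp: imbalance_def)
  have "(\<Sum>l<n. P $$ (l, i) * U $$ (l, j)) = (\<Sum>l<m. V $$ (l, i) * Q $$ (l, j))"
    "(\<Sum>l<n. U $$ (l, i) * P $$ (l, j)) = (\<Sum>l<m. Q $$ (l, i) * V $$ (l, j))"
    using cross[THEN arg_cong, of "\<lambda>X. X $$ (i, j)"] carrier ij
    by (simp_all only: index_transpose_mult_mat_sum[of _ n k _ k] index_transpose_mult_mat_sum[of _ m k _ k])
  then have "(\<Sum>l<n. \<eta> * (P $$ (l, i) * U $$ (l, j))) = (\<Sum>l<m. \<eta> * (Q $$ (l, j) * V $$ (l, i)))"
    "(\<Sum>l<n. \<eta> * (P $$ (l, j) * U $$ (l, i))) = (\<Sum>l<m. \<eta> * (Q $$ (l, i) * V $$ (l, j)))"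
    by (simp_all add: sum_distrib_left[symmetric] mult.commute)
  moreover have "U - \<eta> \<cdot>\<^sub>m P \<in> carrier_mat n k" "V - \<eta> \<cdot>\<^sub>m Q \<in> carrier_mat m k" using carrier by auto
  ultimately show "imbalance (U - \<eta> \<cdot>\<^sub>m P) (V - \<eta> \<cdot>\<^sub>m Q) $$ (i, j) = (imbalance U V + \<eta>\<^sup>2 \<cdot>\<^sub>m imbalance P Q) $$ (i, j)"
    using carrier ij unfolding imbalance_def
    by (simp add: index_transpose_mult_mat_sum[of _ n k _ k] index_transpose_mult_mat_sum[of _ m k _ k]
        sum_subtractf sum.distrib sum_distrib_left algebra_simps power2_eq_square del: index_mult_mat(1))
qed (use carrier in \<open>auto simp: imbalance_def\<close>)

lemma fro_inner_residual_gd_direction: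
  fixes U V M :: "real mat"
  assumes U: "U \<in> carrier_mat d1 r" and V: "V \<in> carrier_mat d2 r" and M: "M \<in> carrier_mat d1 d2"
  defines "R \<equiv> residual M U V"
  shows "fro_inner R ((R * V) * transpose_mat V + U * transpose_mat (transpose_mat R * U))
    = (fro_norm (R * V))\<^sup>2 + (fro_norm (transpose_mat R * U))\<^sup>2"
proof -
  have R: "R \<in> carrier_mat d1 d2" unfolding R_def residual_def using U V M by auto
  have QT: "transpose_mat (transpose_mat R * U) = transpose_mat U * R"
    using R U by (simp add: transpose_mult[of _ d2 d1 _ r])
  have "fro_inner R (U * (transpose_mat U * R)) = (fro_norm (transpose_mat U * R))\<^sup>2"
    using fro_inner_mult_left_adjoint[OF R U, of "transpose_mat U * R"] R U by (simp add: power2_fro_norm)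
  then have "fro_inner R (U * transpose_mat (transpose_mat R * U)) = (fro_norm (transpose_mat R * U))\<^sup>2"
    by (metis QT fro_norm_transpose)
  moreover have "fro_inner R ((R * V) * transpose_mat V) = (fro_norm (R * V))\<^sup>2"
    using fro_inner_mult_right_adjoint[OF R, of "R * V" r "transpose_mat V"] R V
    by (simp add: power2_fro_norm)
  ultimately show ?thesis
    using R U V by (simp add: fro_inner_add_right)
qed

lemma descent_scalar_bounds:
  fixes \<rho> a b u v x :: real
  assumes nonneg: "\<rho> \<ge> 0" "a \<ge> 0" "b \<ge> 0" "u \<ge> 0" "v \<ge> 0" "x \<ge> 0"
    and a: "a \<le> \<rho> * v" and b: "b \<le> \<rho> * u" and x: "x \<le> a * v + u * b"
  shows "x\<^sup>2 \<le> (a\<^sup>2 + b\<^sup>2) * (u\<^sup>2 + v\<^sup>2)" "x \<le> \<rho> * (u\<^sup>2 + v\<^sup>2)"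
    "2 * (a * b) \<le> a\<^sup>2 + b\<^sup>2" "2 * (a * b) \<le> \<rho>\<^sup>2 * (u\<^sup>2 + v\<^sup>2)"
proof -
  have "x\<^sup>2 \<le> (a * v + u * b)\<^sup>2" using x nonneg by (intro power_mono) auto
  also have "\<dots> \<le> (a\<^sup>2 + b\<^sup>2) * (u\<^sup>2 + v\<^sup>2)"
    using zero_le_power2[of "a * u - b * v"] by (simp add: power2_eq_square algebra_simps)
  finally show "x\<^sup>2 \<le> (a\<^sup>2 + b\<^sup>2) * (u\<^sup>2 + v\<^sup>2)" .
  have "x \<le> (\<rho> * v) * v + u * (\<rho> * u)"
    using x a b nonneg by (smt (verit) mult_left_mono mult_right_mono)
  then show "x \<le> \<rho> * (u\<^sup>2 + v\<^sup>2)" by (simp add: power2_eq_square algebra_simps)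
  show "2 * (a * b) \<le> a\<^sup>2 + b\<^sup>2"
    using zero_le_power2[of "a - b"] by (simp add: power2_eq_square algebra_simps)
  have "2 * (a * b) \<le> 2 * ((\<rho> * v) * (\<rho> * u))" using a b nonneg by (simp add: mult_mono)
  also have "\<dots> \<le> \<rho>\<^sup>2 * (u\<^sup>2 + v\<^sup>2)"
    using mult_left_mono[OF zero_le_power2[of "u - v"], of "\<rho>\<^sup>2"] by (simp add: power2_eq_square algebra_simps)
  finally show "2 * (a * b) \<le> \<rho>\<^sup>2 * (u\<^sup>2 + v\<^sup>2)" .
qed

text \<open>The scalar core of the descent step: with \<open>a, b, u, v, x, Y\<close> the norms of
  \<open>P, Q, U, V, X, Y\<close> and \<open>F = \<langle>R - \<eta>X, Y\<rangle>\<close>, the left-hand side is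
  \<open>\<parallel>R - \<eta>X + \<eta>\<^sup>2Y\<parallel>\<^sup>2 - \<parallel>R\<parallel>\<^sup>2\<close>.\<close>
lemma descent_scalar_ineq:
  fixes \<eta> \<rho> a b u v x F Y :: real
  assumes nonneg: "\<eta> \<ge> 0" "\<rho> \<ge> 0" "a \<ge> 0" "b \<ge> 0" "u \<ge> 0" "v \<ge> 0" "x \<ge> 0" "Y \<ge> 0"
    and step: "\<eta> * (u\<^sup>2 + v\<^sup>2) \<le> 1/10" "\<eta> * \<rho> \<le> 1/50"
    and a: "a \<le> \<rho> * v" and b: "b \<le> \<rho> * u"
    and x: "x \<le> a * v + u * b" and F: "F \<le> (\<rho> + \<eta> * x) * (a * b)" and Y: "Y \<le> a * b"
  shows "- 2 * \<eta> * (a\<^sup>2 + b\<^sup>2) + \<eta>\<^sup>2 * x\<^sup>2 + 2 * \<eta>\<^sup>2 * F + (\<eta>\<^sup>2)\<^sup>2 * Y\<^sup>2 \<le> 0"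
proof -
  define g where "g = a\<^sup>2 + b\<^sup>2"
  define S where "S = u\<^sup>2 + v\<^sup>2"
  define y where "y = a * b"
  have g: "g \<ge> 0" and S: "S \<ge> 0" and y: "y \<ge> 0" using nonneg by (simp_all add: g_def S_def y_def)
  note bounds = descent_scalar_bounds[OF nonneg(2-7) a b x, folded g_def S_def y_def]
  have "\<eta>\<^sup>2 * x\<^sup>2 \<le> (\<eta> * g) * (\<eta> * S)"
    using mult_left_mono[OF bounds(1), of "\<eta>\<^sup>2"] by (simp add: power2_eq_square algebra_simps)
  also have "\<dots> \<le> (\<eta> * g) * (1/10)" using step nonneg g unfolding S_def by (intro mult_left_mono) auto
  finally have t1: "\<eta>\<^sup>2 * x\<^sup>2 \<le> (\<eta> * g) * (1/10)" .
  have "2 * \<eta>\<^sup>2 * F \<le> \<eta>\<^sup>2 * \<rho> * (2 * y) + \<eta>^3 * x * (2 * y)"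
    using mult_left_mono[OF F, of "2 * \<eta>\<^sup>2"] unfolding y_def
    by (simp add: algebra_simps power2_eq_square power3_eq_cube)
  also have "\<dots> \<le> \<eta>\<^sup>2 * \<rho> * g + \<eta>^3 * (\<rho> * S) * g"
    using bounds nonneg y by (intro add_mono mult_mono mult_left_mono) auto
  also have "\<dots> = (\<eta> * g) * (\<eta> * \<rho>) + (\<eta> * g) * ((\<eta> * \<rho>) * (\<eta> * S))"
    by (simp add: algebra_simps power2_eq_square power3_eq_cube)
  also have "\<dots> \<le> (\<eta> * g) * (1/50) + (\<eta> * g) * ((1/50) * (1/10))"
    using step nonneg g S unfolding S_def by (intro add_mono mult_left_mono mult_mono) auto
  finally have t2: "2 * \<eta>\<^sup>2 * F \<le> (\<eta> * g) * (1/50) + (\<eta> * g) * ((1/50) * (1/10))" .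
  have "Y * Y \<le> (g/2) * (\<rho>\<^sup>2 * S / 2)"
    using Y bounds nonneg y unfolding y_def[symmetric] by (intro mult_mono) auto
  then have "(\<eta>\<^sup>2)\<^sup>2 * Y\<^sup>2 \<le> (\<eta>\<^sup>2)\<^sup>2 * ((g/2) * (\<rho>\<^sup>2 * S / 2))"
    by (intro mult_left_mono) (auto simp: power2_eq_square)
  also have "\<dots> = (\<eta> * g) * ((\<eta> * \<rho>)\<^sup>2 * (\<eta> * S)) / 4"
    by (simp add: algebra_simps power2_eq_square)
  also have "\<dots> \<le> (\<eta> * g) * ((1/50)\<^sup>2 * (1/10)) / 4"
    using step nonneg g S unfolding S_def
    by (intro divide_right_mono mult_left_mono mult_mono power_mono) auto
  finally have t3: "(\<eta>\<^sup>2)\<^sup>2 * Y\<^sup>2 \<le> (\<eta> * g) * ((1/50)\<^sup>2 * (1/10)) / 4" .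
  have "0 \<le> \<eta> * g" using nonneg g by simp
  then show ?thesis using t1 t2 t3 unfolding g_def[symmetric] by (simp add: power2_eq_square)
qed

lemma fro_norm_gradient_le:
  fixes R U V :: "real mat"
  assumes "R \<in> carrier_mat d1 d2" "U \<in> carrier_mat d1 r" "V \<in> carrier_mat d2 r"
  shows "fro_norm (R * V) \<le> fro_norm R * fro_norm V" "fro_norm (transpose_mat R * U) \<le> fro_norm R * fro_norm U"
  using fro_norm_mult_le[of R V] fro_norm_transpose_mult_le[of R U] assms by auto

lemma gd_update_residual_le:
  fixes U V M :: "real mat"
  assumes U: "U \<in> carrier_mat d1 r" and V: "V \<in> carrier_mat d2 r" and M: "M \<in> carrier_mat d1 d2"
    and \<eta>: "\<eta> \<ge> 0" "\<eta> * ((fro_norm U)\<^sup>2 + (fro_norm V)\<^sup>2) \<le> 1/10" "\<eta> * fro_norm (residual M U V) \<le> 1/50"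
  shows "fro_norm (residual M (fst (gd_update M \<eta> U V)) (snd (gd_update M \<eta> U V))) \<le> fro_norm (residual M U V)"
proof -
  define R where "R = residual M U V"
  define P where "P = R * V"
  define Q where "Q = transpose_mat R * U"
  define X where "X = P * transpose_mat V + U * transpose_mat Q"
  define Y where "Y = P * transpose_mat Q"
  have R: "R \<in> carrier_mat d1 d2" unfolding R_def residual_def using U V M by auto
  have P: "P \<in> carrier_mat d1 r" and Q: "Q \<in> carrier_mat d2 r" unfolding P_def Q_def using R U V by auto
  have X: "X \<in> carrier_mat d1 d2" and Y: "Y \<in> carrier_mat d1 d2" unfolding X_def Y_def using P Q U V by auto
  have new: "residual M (fst (gd_update M \<eta> U V)) (snd (gd_update M \<eta> U V)) = (R - \<eta> \<cdot>\<^sub>m X) + \<eta>\<^sup>2 \<cdot>\<^sub>m Y"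
    unfolding gd_update_def X_def Y_def P_def Q_def R_def using residual_diff_smult[OF U V P Q M]
    by (simp add: P_def Q_def R_def)
  have "fro_inner R X = (fro_norm P)\<^sup>2 + (fro_norm Q)\<^sup>2"
    unfolding X_def P_def Q_def R_def by (rule fro_inner_residual_gd_direction[OF U V M])
  then have "(fro_norm (R - \<eta> \<cdot>\<^sub>m X))\<^sup>2
      = (fro_norm R)\<^sup>2 - 2 * \<eta> * ((fro_norm P)\<^sup>2 + (fro_norm Q)\<^sup>2) + \<eta>\<^sup>2 * (fro_norm X)\<^sup>2"
    using R X by (simp add: power2_fro_norm_diff_smult)
  moreover have Y_le: "fro_norm Y \<le> fro_norm P * fro_norm Q"
    unfolding Y_def using fro_norm_mult_transpose_le[of P Q] P Q by simp
  moreover have "fro_inner (R - \<eta> \<cdot>\<^sub>m X) Y \<le> (fro_norm R + \<eta> * fro_norm X) * (fro_norm P * fro_norm Q)"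
  proof -
    have "fro_inner (R - \<eta> \<cdot>\<^sub>m X) Y \<le> fro_norm (R - \<eta> \<cdot>\<^sub>m X) * fro_norm Y"
      using R X Y by (intro fro_inner_le) auto
    also have "\<dots> \<le> (fro_norm R + \<eta> * fro_norm X) * (fro_norm P * fro_norm Q)"
      using fro_norm_diff_le[of "\<eta> \<cdot>\<^sub>m X" R] Y_le R X \<eta>
      by (intro mult_mono) (auto simp: fro_norm_smult fro_norm_nonneg)
    finally show ?thesis .
  qed
  moreover have "fro_norm X \<le> fro_norm P * fro_norm V + fro_norm U * fro_norm Q"
    using fro_norm_add_le[of "U * transpose_mat Q" "P * transpose_mat V"]
      fro_norm_mult_transpose_le[of P V] fro_norm_mult_transpose_le[of U Q] P Q U V
    unfolding X_def by auto
  ultimately have "(fro_norm ((R - \<eta> \<cdot>\<^sub>m X) + \<eta>\<^sup>2 \<cdot>\<^sub>m Y))\<^sup>2 \<le> (fro_norm R)\<^sup>2"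
    using descent_scalar_ineq[of \<eta> "fro_norm R" "fro_norm P" "fro_norm Q" "fro_norm U" "fro_norm V"
        "fro_norm X" "fro_norm Y" "fro_inner (R - \<eta> \<cdot>\<^sub>m X) Y"] \<eta> R X Y
      fro_norm_gradient_le[OF R U V, folded P_def Q_def]
    by (simp add: power2_fro_norm_add_smult fro_norm_nonneg R_def)
  then show ?thesis
    unfolding new R_def by (metis fro_norm_nonneg power2_le_imp_le)
qed

lemma gd_update_imbalance_le:
  fixes U V M :: "real mat"
  assumes U: "U \<in> carrier_mat d1 r" and V: "V \<in> carrier_mat d2 r" and M: "M \<in> carrier_mat d1 d2"
  shows "fro_norm (imbalance (fst (gd_update M \<eta> U V)) (snd (gd_update M \<eta> U V)))
    \<le> fro_norm (imbalance U V) + \<eta>\<^sup>2 * ((fro_norm (residual M U V))\<^sup>2 * ((fro_norm U)\<^sup>2 + (fro_norm V)\<^sup>2))"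
proof -
  define R where "R = residual M U V"
  define P where "P = R * V"
  define Q where "Q = transpose_mat R * U"
  have R: "R \<in> carrier_mat d1 d2" unfolding R_def residual_def using U V M by auto
  have P: "P \<in> carrier_mat d1 r" and Q: "Q \<in> carrier_mat d2 r" unfolding P_def Q_def using R U V by auto
  have "transpose_mat P * U = transpose_mat V * Q" "transpose_mat U * P = transpose_mat Q * V"
    unfolding P_def Q_def using R U V
    by (simp_all add: transpose_mult[of _ d1 d2 _ r] transpose_mult[of _ d2 d1 _ r] assoc_mult_mat[of _ r d2 _ d1 _ r]
        assoc_mult_mat[of _ r d1 _ d2 _ r])
  then have "imbalance (fst (gd_update M \<eta> U V)) (snd (gd_update M \<eta> U V)) = imbalance U V + \<eta>\<^sup>2 \<cdot>\<^sub>m imbalance P Q"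
    unfolding gd_update_def R_def[symmetric] P_def[symmetric] Q_def[symmetric]
    by (simp add: imbalance_diff_smult[OF U V P Q])
  moreover have "fro_norm (imbalance U V + \<eta>\<^sup>2 \<cdot>\<^sub>m imbalance P Q) \<le> fro_norm (imbalance U V) + \<eta>\<^sup>2 * fro_norm (imbalance P Q)"
  proof -
    have "imbalance U V \<in> carrier_mat r r" "imbalance P Q \<in> carrier_mat r r"
      using U V P Q by (auto simp: imbalance_def)
    then show ?thesis
      using fro_norm_add_le[of "\<eta>\<^sup>2 \<cdot>\<^sub>m imbalance P Q" "imbalance U V"] by (simp add: fro_norm_smult)
  qed
  moreover have "fro_norm (imbalance P Q) \<le> (fro_norm P)\<^sup>2 + (fro_norm Q)\<^sup>2"
    using fro_norm_imbalance_le[OF P Q] .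
  moreover have "(fro_norm P)\<^sup>2 + (fro_norm Q)\<^sup>2 \<le> (fro_norm R)\<^sup>2 * ((fro_norm U)\<^sup>2 + (fro_norm V)\<^sup>2)"
  proof -
    have "(fro_norm P)\<^sup>2 \<le> (fro_norm R)\<^sup>2 * (fro_norm V)\<^sup>2" "(fro_norm Q)\<^sup>2 \<le> (fro_norm R)\<^sup>2 * (fro_norm U)\<^sup>2"
      using fro_norm_gradient_le[OF R U V, folded P_def Q_def]
      by (metis fro_norm_nonneg power_mono power_mult_distrib)+
    then show ?thesis by (simp add: algebra_simps)
  qed
  ultimately show ?thesis unfolding R_def
    by (smt (verit) mult_left_mono zero_le_power2)
qed

text \<open>Solve the quadratic inequality in \<open>\<parallel>U\<^sup>TU\<parallel>\<close> given by
  \<open>\<parallel>U\<^sup>TU\<parallel>\<^sup>2 = \<langle>U\<^sup>TU, V\<^sup>TV\<rangle> + \<langle>U\<^sup>TU, U\<^sup>TU - V\<^sup>TV\<rangle> \<le> \<parallel>UV\<^sup>T\<parallel>\<^sup>2 + \<parallel>U\<^sup>TU\<parallel> \<parallel>U\<^sup>TU - V\<^sup>TV\<parallel>\<close>.\<close>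
lemma fro_norm_gram_le_imbalance:
  fixes U V :: "real mat"
  assumes U: "U \<in> carrier_mat n r" and V: "V \<in> carrier_mat p r"
  shows "fro_norm (transpose_mat U * U) \<le> fro_norm (U * transpose_mat V) + fro_norm (imbalance U V)"
proof -
  define A where "A = transpose_mat U * U"
  define B where "B = transpose_mat V * V"
  let ?x = "fro_norm A" and ?p = "fro_norm (U * transpose_mat V)" and ?\<delta> = "fro_norm (A - B)"
  have A: "A \<in> carrier_mat r r" and B: "B \<in> carrier_mat r r" unfolding A_def B_def using U V by auto
  have "fro_inner A B = fro_inner V (V * A)"
    unfolding B_def using fro_inner_mult_left_adjoint[OF A, of "transpose_mat V" p V] V A
    by (simp add: fro_inner_commute)
  also have "\<dots> = fro_inner (V * transpose_mat U) (V * transpose_mat U)"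
    unfolding A_def using fro_inner_mult_right_adjoint[OF V, of "V * transpose_mat U" n U] U V
    by (simp add: assoc_mult_mat[of _ p r _ n _ r])
  also have "\<dots> = ?p\<^sup>2"
    using fro_norm_mult_transpose_commute[OF U V] by (simp add: power2_fro_norm[symmetric])
  finally have AB: "fro_inner A B = ?p\<^sup>2" .
  have "A = B + (A - B)" using A B by (intro eq_matI) auto
  then have "?x\<^sup>2 = fro_inner A B + fro_inner A (A - B)"
    using A B by (metis fro_inner_add_right power2_fro_norm carrier_matD minus_carrier_mat)
  also have "\<dots> \<le> ?p\<^sup>2 + ?x * ?\<delta>"
    unfolding AB using fro_inner_le[of "A - B" A] A B by (simp add: minus_carrier_mat)
  finally have quadratic: "?x\<^sup>2 \<le> ?p\<^sup>2 + ?x * ?\<delta>" .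
  show ?thesis
  proof (rule ccontr)
    assume "\<not> ?thesis"
    then have "?x > ?p + ?\<delta>" unfolding A_def B_def imbalance_def by simp
    then have "?x * ?x > ?x * (?p + ?\<delta>)" "?x * ?p \<ge> ?p * ?p"
      using fro_norm_nonneg[of "A - B"] fro_norm_nonneg[of "U * transpose_mat V"] by (auto intro: mult_right_mono)
    then show False using quadratic by (simp add: power2_eq_square algebra_simps)
  qed
qed

lemma factor_norms_le:
  fixes U V M :: "real mat"
  assumes U: "U \<in> carrier_mat d1 r" and V: "V \<in> carrier_mat d2 r" and M: "M \<in> carrier_mat d1 d2"
    and R: "fro_norm (residual M U V) \<le> 2 * fro_norm M" and D: "fro_norm (imbalance U V) \<le> fro_norm M"
  shows "(fro_norm U)\<^sup>2 \<le> 4 * sqrt (real r) * fro_norm M" "(fro_norm V)\<^sup>2 \<le> 4 * sqrt (real r) * fro_norm M"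
proof -
  have "U * transpose_mat V = residual M U V + M" using U V M by (auto simp: residual_def intro!: eq_matI)
  then have UV: "fro_norm (U * transpose_mat V) \<le> 3 * fro_norm M"
    using fro_norm_add_le[of M "residual M U V"] R U V M by (auto simp: residual_def)
  have VU: "fro_norm (V * transpose_mat U) = fro_norm (U * transpose_mat V)"
    by (rule fro_norm_mult_transpose_commute[OF U V])
  have DV: "fro_norm (imbalance V U) = fro_norm (imbalance U V)"
    using U V by (simp add: imbalance_def fro_norm_diff_commute)
  have "(fro_norm U)\<^sup>2 \<le> sqrt (real r) * (fro_norm (U * transpose_mat V) + fro_norm (imbalance U V))"
    using power2_fro_norm_le_sqrt_gram[OF U] fro_norm_gram_le_imbalance[OF U V]
    by (meson mult_left_mono order_trans real_sqrt_ge_zero of_nat_0_le_iff)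
  moreover have "(fro_norm V)\<^sup>2 \<le> sqrt (real r) * (fro_norm (V * transpose_mat U) + fro_norm (imbalance V U))"
    using power2_fro_norm_le_sqrt_gram[OF V] fro_norm_gram_le_imbalance[OF V U]
    by (meson mult_left_mono order_trans real_sqrt_ge_zero of_nat_0_le_iff)
  moreover have "sqrt (real r) * (fro_norm (U * transpose_mat V) + fro_norm (imbalance U V)) \<le> 4 * sqrt (real r) * fro_norm M"
    using mult_left_mono[of "fro_norm (U * transpose_mat V) + fro_norm (imbalance U V)" "4 * fro_norm M" "sqrt (real r)"] UV D
    by (simp add: mult_ac)
  ultimately show "(fro_norm U)\<^sup>2 \<le> 4 * sqrt (real r) * fro_norm M" "(fro_norm V)\<^sup>2 \<le> 4 * sqrt (real r) * fro_norm M"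
    unfolding VU DV by linarith+
qed

section \<open>The gradient descent run\<close>

lemma mf_step_nonneg: "\<epsilon> \<ge> 0 \<Longrightarrow> mf_step M r \<epsilon> t \<ge> 0"
  unfolding mf_step_def by (auto intro!: divide_nonneg_nonneg)

lemma mf_step_eq:
  assumes "fro_norm M > 0"
  shows "mf_step M r \<epsilon> t = sqrt (\<epsilon> / real r) / (100 * (real t + 1) * (fro_norm M * sqrt (fro_norm M)))"
proof -
  have "fro_norm M powr (3/2) = fro_norm M powr (1 + 1/2)" by simp
  also have "\<dots> = fro_norm M * sqrt (fro_norm M)"
    using assms by (simp only: powr_add powr_one powr_half_sqrt less_imp_le)
  finally show ?thesis unfolding mf_step_def by (simp add: mult.assoc)
qed

lemma mf_step_bounds:
  fixes M :: "real mat" and S \<rho> :: real and t :: nat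
  assumes \<epsilon>: "0 < \<epsilon>" "\<epsilon> \<le> fro_norm M"
    and S: "S \<le> 8 * sqrt (real r) * fro_norm M" and \<rho>: "0 \<le> \<rho>" "\<rho> \<le> 2 * fro_norm M"
  defines "\<eta> \<equiv> mf_step M r \<epsilon> t"
  shows "\<eta> * S \<le> 1/10" "\<eta> * \<rho> \<le> 1/50" "\<eta>\<^sup>2 * (\<rho>\<^sup>2 * S) \<le> 32 * \<epsilon> / (10000 * (real t + 1)\<^sup>2)"
proof -
  define m where "m = fro_norm M"
  define s where "s = sqrt (\<epsilon> / real r)"
  define D where "D = 100 * (real t + 1) * (m * sqrt m)"
  have m: "m > 0" using \<epsilon> unfolding m_def by linarith
  have D: "100 * (m * sqrt m) \<le> D" "0 < 100 * (m * sqrt m)" "0 < D" unfolding D_def using m by auto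
  have \<eta>_eq: "\<eta> = s / D" unfolding \<eta>_def s_def D_def m_def using m mf_step_eq by (simp add: m_def)
  have s0: "s \<ge> 0" unfolding s_def using \<epsilon> by simp
  have \<eta>0: "\<eta> \<ge> 0" unfolding \<eta>_eq using s0 D by simp
  have sr: "s * sqrt (real r) \<le> sqrt \<epsilon>" and s: "s \<le> sqrt \<epsilon>"
  proof (atomize (full), cases "r = 0")
    case False
    then have "s * sqrt (real r) = sqrt \<epsilon>" unfolding s_def by (simp add: real_sqrt_mult[symmetric])
    moreover have "\<epsilon> / real r \<le> \<epsilon> / 1" using False \<epsilon> by (intro divide_left_mono) auto
    ultimately show "s * sqrt (real r) \<le> sqrt \<epsilon> \<and> s \<le> sqrt \<epsilon>" unfolding s_def by simp
  qed (use \<epsilon> in \<open>simp add: s_def\<close>)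
  have "sqrt \<epsilon> \<le> sqrt m" using \<epsilon> unfolding m_def by simp
  then have srm: "s * sqrt (real r) \<le> sqrt m" and sm: "s \<le> sqrt m" using sr s by linarith+
  have "\<eta> * S \<le> s / D * (8 * sqrt (real r) * m)" using mult_left_mono[OF S \<eta>0] unfolding \<eta>_eq m_def .
  also have "\<dots> = 8 * m * (s * sqrt (real r)) / D" by (simp add: mult_ac)
  also have "\<dots> \<le> 8 * m * sqrt m / D" using srm m D by (intro divide_right_mono mult_left_mono) auto
  also have "\<dots> \<le> 8 * m * sqrt m / (100 * (m * sqrt m))" using m D by (intro divide_left_mono) auto
  finally show "\<eta> * S \<le> 1/10" using m by simp
  have "\<eta> * \<rho> \<le> s / D * (2 * m)" using mult_left_mono[OF \<rho>(2) \<eta>0] unfolding \<eta>_eq m_def .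
  also have "\<dots> = 2 * m * s / D" by (simp add: mult_ac)
  also have "\<dots> \<le> 2 * m * sqrt m / D" using sm m D by (intro divide_right_mono mult_left_mono) auto
  also have "\<dots> \<le> 2 * m * sqrt m / (100 * (m * sqrt m))" using m D by (intro divide_left_mono) auto
  finally show "\<eta> * \<rho> \<le> 1/50" using m by simp
  have "\<rho>\<^sup>2 * S \<le> \<rho>\<^sup>2 * (8 * sqrt (real r) * m)" using S by (simp add: m_def mult_left_mono)
  also have "\<dots> \<le> (2 * m)\<^sup>2 * (8 * sqrt (real r) * m)"
    using \<rho> m by (intro mult_right_mono power_mono) (auto simp: m_def)
  finally have "\<eta>\<^sup>2 * (\<rho>\<^sup>2 * S) \<le> \<eta>\<^sup>2 * ((2 * m)\<^sup>2 * (8 * sqrt (real r) * m))" by (simp add: mult_left_mono)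
  also have "\<dots> = 32 * m^3 * (s\<^sup>2 * sqrt (real r)) / D\<^sup>2"
    unfolding \<eta>_eq by (simp add: power_divide power2_eq_square power3_eq_cube mult_ac)
  also have "s\<^sup>2 * sqrt (real r) \<le> \<epsilon>"
    using mult_left_mono[OF sr s0] mult_right_mono[OF s, of "sqrt \<epsilon>"] \<epsilon>
    by (simp add: power2_eq_square mult.assoc)
  then have "32 * m^3 * (s\<^sup>2 * sqrt (real r)) / D\<^sup>2 \<le> 32 * m^3 * \<epsilon> / D\<^sup>2"
    using m by (intro divide_right_mono mult_left_mono) auto
  also have "D\<^sup>2 = 10000 * (real t + 1)\<^sup>2 * m^3"
    unfolding D_def power_mult_distrib real_sqrt_pow2[OF less_imp_le[OF m]]
    by (simp add: power3_eq_cube power2_eq_square mult_ac)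
  finally show "\<eta>\<^sup>2 * (\<rho>\<^sup>2 * S) \<le> 32 * \<epsilon> / (10000 * (real t + 1)\<^sup>2)" using m by simp
qed

lemma mf_gd_step_le:
  fixes M U0 V0 :: "real mat" and t :: nat
  assumes M: "M \<in> carrier_mat d1 d2" and U0: "U0 \<in> carrier_mat d1 r" and V0: "V0 \<in> carrier_mat d2 r"
    and \<epsilon>: "0 < \<epsilon>" "\<epsilon> \<le> fro_norm M"
  defines "U n \<equiv> fst (mf_gd M r \<epsilon> U0 V0 n)" and "V n \<equiv> snd (mf_gd M r \<epsilon> U0 V0 n)"
  assumes R: "fro_norm (residual M (U t) (V t)) \<le> 2 * fro_norm M"
    and D: "fro_norm (imbalance (U t) (V t)) \<le> fro_norm M"
  shows "fro_norm (residual M (U (Suc t)) (V (Suc t))) \<le> fro_norm (residual M (U t) (V t))"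
    and "fro_norm (imbalance (U (Suc t)) (V (Suc t)))
      \<le> fro_norm (imbalance (U t) (V t)) + 32 * \<epsilon> / (10000 * (real t + 1)\<^sup>2)"
proof -
  have UV: "U t \<in> carrier_mat d1 r" "V t \<in> carrier_mat d2 r"
    using mf_gd_carrier[OF U0 V0 M] by (simp_all add: U_def V_def)
  have step: "U (Suc t) = fst (gd_update M (mf_step M r \<epsilon> t) (U t) (V t))"
    "V (Suc t) = snd (gd_update M (mf_step M r \<epsilon> t) (U t) (V t))"
    unfolding U_def V_def by (simp_all only: mf_gd_Suc_gd_update)
  have "(fro_norm (U t))\<^sup>2 + (fro_norm (V t))\<^sup>2 \<le> 8 * sqrt (real r) * fro_norm M"
    using factor_norms_le[OF UV M R D] by linarith
  note bounds = mf_step_bounds[OF \<epsilon> this fro_norm_nonneg R, of t]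
  show "fro_norm (residual M (U (Suc t)) (V (Suc t))) \<le> fro_norm (residual M (U t) (V t))"
    unfolding step using \<epsilon> bounds by (intro gd_update_residual_le[OF UV M] mf_step_nonneg) auto
  show "fro_norm (imbalance (U (Suc t)) (V (Suc t)))
      \<le> fro_norm (imbalance (U t) (V t)) + 32 * \<epsilon> / (10000 * (real t + 1)\<^sup>2)"
    unfolding step using gd_update_imbalance_le[OF UV M, of "mf_step M r \<epsilon> t"] bounds(3) by linarith
qed

lemma inverse_square_le_telescope:
  fixes a :: real
  assumes "1 \<le> a"
  shows "1 / (2 * a\<^sup>2) \<le> 1 / a - 1 / (a + 1)"
proof -
  have "a * (a + 1) \<le> 2 * a\<^sup>2"
    using mult_left_mono[of 1 a a] assms by (simp add: power2_eq_square algebra_simps)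
  then have "1 / (2 * a\<^sup>2) \<le> 1 / (a * (a + 1))" using assms by (intro divide_left_mono) auto
  also have "\<dots> = 1 / a - 1 / (a + 1)" using assms by (simp add: field_simps)
  finally show ?thesis .
qed

lemma mf_gd_invariant:
  fixes M U0 V0 :: "real mat"
  assumes M: "M \<in> carrier_mat d1 d2" and U0: "U0 \<in> carrier_mat d1 r" and V0: "V0 \<in> carrier_mat d2 r"
    and \<epsilon>: "0 < \<epsilon>" "\<epsilon> \<le> fro_norm M"
    and R0: "fro_norm (residual M U0 V0) \<le> 2 * fro_norm M" and D0: "fro_norm (imbalance U0 V0) \<le> \<epsilon> / 4"
  defines "U n \<equiv> fst (mf_gd M r \<epsilon> U0 V0 n)" and "V n \<equiv> snd (mf_gd M r \<epsilon> U0 V0 n)"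
  shows "fro_norm (residual M (U t) (V t)) \<le> fro_norm (residual M U0 V0)
    \<and> fro_norm (imbalance (U t) (V t)) \<le> \<epsilon> / 4 + 64 / 10000 * \<epsilon> * (1 - 1 / (real t + 1))"
proof (induction t)
  case 0
  then show ?case using D0 by (simp add: U_def V_def)
next
  case (Suc t)
  have "64 / 10000 * \<epsilon> * (1 - 1 / (real t + 1)) \<le> 64 / 10000 * \<epsilon> * 1"
    using \<epsilon> by (intro mult_left_mono) auto
  then have D: "fro_norm (imbalance (U t) (V t)) \<le> fro_norm M" using Suc.IH \<epsilon> by linarith
  have R: "fro_norm (residual M (U t) (V t)) \<le> 2 * fro_norm M" using Suc.IH R0 by linarith
  note step = mf_gd_step_le[OF M U0 V0 \<epsilon>, of t, folded U_def V_def, OF R D]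
  have "32 * \<epsilon> / (10000 * (real t + 1)\<^sup>2) \<le> 64 / 10000 * \<epsilon> * (1 / (real t + 1) - 1 / (real t + 2))"
    using mult_left_mono[OF inverse_square_le_telescope[of "real t + 1"], of "64 / 10000 * \<epsilon>"] \<epsilon>
    by (simp add: field_simps)
  moreover have "real (Suc t) + 1 = real t + 2" by simp
  moreover have "64 / 10000 * \<epsilon> * (1 - 1 / (real t + 1)) + 64 / 10000 * \<epsilon> * (1 / (real t + 1) - 1 / (real t + 2))
      = 64 / 10000 * \<epsilon> * (1 - 1 / (real t + 2))" by (simp only: right_diff_distrib)
  ultimately show ?case using Suc.IH step by (simp only:) linarith
qed

definition mf_gd_well_behaved :: "real mat \<Rightarrow> nat \<Rightarrow> real \<Rightarrow> real mat \<Rightarrow> real mat \<Rightarrow> bool" where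
  "mf_gd_well_behaved M r \<epsilon> U0 V0 \<longleftrightarrow>
     (let U = (\<lambda>t. fst (mf_gd M r \<epsilon> U0 V0 t)); V = (\<lambda>t. snd (mf_gd M r \<epsilon> U0 V0 t)) in
       (\<forall>t. fro_norm (transpose_mat (U t) * U t - transpose_mat (V t) * V t) \<le> \<epsilon>)
     \<and> (\<forall>t. mf_obj M (U (Suc t)) (V (Suc t)) \<le> mf_obj M (U t) (V t))
     \<and> mf_obj M (U 0) (V 0) \<le> 2 * (fro_norm M)\<^sup>2
     \<and> (\<forall>t. (fro_norm (U t))\<^sup>2 \<le> 5 * sqrt (real r) * fro_norm M
          \<and> (fro_norm (V t))\<^sup>2 \<le> 5 * sqrt (real r) * fro_norm M))"

theorem mf_gd_well_behaved_if_small_init: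
  fixes M U0 V0 :: "real mat"
  assumes M: "M \<in> carrier_mat d1 d2" and U0: "U0 \<in> carrier_mat d1 r" and V0: "V0 \<in> carrier_mat d2 r"
    and \<epsilon>: "0 < \<epsilon>" "\<epsilon> < fro_norm M" and init: "(fro_norm U0)\<^sup>2 + (fro_norm V0)\<^sup>2 \<le> \<epsilon> / 4"
  shows "mf_gd_well_behaved M r \<epsilon> U0 V0"
proof -
  define U where "U t = fst (mf_gd M r \<epsilon> U0 V0 t)" for t
  define V where "V t = snd (mf_gd M r \<epsilon> U0 V0 t)" for t
  have \<epsilon>': "0 < \<epsilon>" "\<epsilon> \<le> fro_norm M" using \<epsilon> by simp_all
  have UV: "U t \<in> carrier_mat d1 r" "V t \<in> carrier_mat d2 r" for t
    using mf_gd_carrier[OF U0 V0 M] by (simp_all add: U_def V_def)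
  have R0: "fro_norm (residual M U0 V0) \<le> 2 * fro_norm M"
  proof -
    have "((fro_norm U0)\<^sup>2 + (fro_norm V0)\<^sup>2) / 2 \<le> \<epsilon> / 8" using init by simp
    then show ?thesis using fro_norm_residual_le[OF U0 V0 M] \<epsilon> by linarith
  qed
  have D0: "fro_norm (imbalance U0 V0) \<le> \<epsilon> / 4" using fro_norm_imbalance_le[OF U0 V0] init by linarith
  have R: "fro_norm (residual M (U t) (V t)) \<le> 2 * fro_norm M"
    and D: "fro_norm (imbalance (U t) (V t)) \<le> \<epsilon>" for t
  proof -
    have "64 / 10000 * \<epsilon> * (1 - 1 / (real t + 1)) \<le> 64 / 10000 * \<epsilon> * 1"
      using \<epsilon> by (intro mult_left_mono) auto
    then show "fro_norm (residual M (U t) (V t)) \<le> 2 * fro_norm M" "fro_norm (imbalance (U t) (V t)) \<le> \<epsilon>"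
      using mf_gd_invariant[OF M U0 V0 \<epsilon>' R0 D0, of t] R0 \<epsilon> unfolding U_def V_def by linarith+
  qed
  have D': "fro_norm (imbalance (U t) (V t)) \<le> fro_norm M" for t using D[of t] \<epsilon> by linarith
  have "fro_norm (residual M (U (Suc t)) (V (Suc t))) \<le> fro_norm (residual M (U t) (V t))" for t
    using mf_gd_step_le(1)[OF M U0 V0 \<epsilon>', of t, folded U_def V_def] R D' by blast
  then have "mf_obj M (U (Suc t)) (V (Suc t)) \<le> mf_obj M (U t) (V t)" for t
    unfolding mf_obj_residual by (intro divide_right_mono power_mono) (auto simp: fro_norm_nonneg)
  moreover have "mf_obj M (U 0) (V 0) \<le> 2 * (fro_norm M)\<^sup>2"
    using power_mono[OF R[of 0] fro_norm_nonneg, of 2] unfolding mf_obj_residual by (simp add: power_mult_distrib)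
  moreover have "(fro_norm (U t))\<^sup>2 \<le> 5 * sqrt (real r) * fro_norm M \<and> (fro_norm (V t))\<^sup>2 \<le> 5 * sqrt (real r) * fro_norm M" for t
  proof -
    have "4 * sqrt (real r) * fro_norm M \<le> 5 * sqrt (real r) * fro_norm M"
      using fro_norm_nonneg[of M] by (intro mult_right_mono) auto
    then show ?thesis using factor_norms_le[OF UV M R D', of t] by linarith
  qed
  ultimately show ?thesis
    using D unfolding mf_gd_well_behaved_def Let_def imbalance_def U_def V_def by blast
qed

section \<open>Measurability\<close>

definition mat_measurable :: "'a measure \<Rightarrow> nat \<Rightarrow> nat \<Rightarrow> ('a \<Rightarrow> real mat) \<Rightarrow> bool" where
  "mat_measurable P n m F \<longleftrightarrow>
     (\<forall>\<omega>. F \<omega> \<in> carrier_mat n m) \<and> (\<forall>i<n. \<forall>j<m. (\<lambda>\<omega>. F \<omega> $$ (i, j)) \<in> borel_measurable P)"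

lemma mat_measurable_carrier: "mat_measurable P n m F \<Longrightarrow> F \<omega> \<in> carrier_mat n m"
  unfolding mat_measurable_def by auto

lemma mat_measurable_entry:
  "mat_measurable P n m F \<Longrightarrow> i < n \<Longrightarrow> j < m \<Longrightarrow> (\<lambda>\<omega>. F \<omega> $$ (i, j)) \<in> borel_measurable P"
  unfolding mat_measurable_def by auto

lemma mat_measurableI:
  assumes "\<And>\<omega>. F \<omega> \<in> carrier_mat n m"
    and "\<And>i j. i < n \<Longrightarrow> j < m \<Longrightarrow> (\<lambda>\<omega>. F \<omega> $$ (i, j)) \<in> borel_measurable P"
  shows "mat_measurable P n m F"
  using assms unfolding mat_measurable_def by auto

lemma mat_measurable_const: "A \<in> carrier_mat n m \<Longrightarrow> mat_measurable P n m (\<lambda>\<omega>. A)"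
  unfolding mat_measurable_def by auto

lemma mat_measurable_diff:
  assumes F: "mat_measurable P n m F" and G: "mat_measurable P n m G"
  shows "mat_measurable P n m (\<lambda>\<omega>. F \<omega> - G \<omega>)"
proof (rule mat_measurableI)
  show "F \<omega> - G \<omega> \<in> carrier_mat n m" for \<omega>
    by (rule minus_carrier_mat[OF mat_measurable_carrier[OF G]])
next
  fix i j assume ij: "i < n" "j < m"
  have "(\<lambda>\<omega>. (F \<omega> - G \<omega>) $$ (i, j)) = (\<lambda>\<omega>. F \<omega> $$ (i, j) - G \<omega> $$ (i, j))"
    using ij by (simp add: carrier_matD[OF mat_measurable_carrier[OF G]])
  then show "(\<lambda>\<omega>. (F \<omega> - G \<omega>) $$ (i, j)) \<in> borel_measurable P"
    using ij by (simp add: borel_measurable_diff mat_measurable_entry[OF F] mat_measurable_entry[OF G])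
qed

lemma mat_measurable_smult:
  assumes F: "mat_measurable P n m F"
  shows "mat_measurable P n m (\<lambda>\<omega>. c \<cdot>\<^sub>m F \<omega>)"
proof (rule mat_measurableI)
  show "c \<cdot>\<^sub>m F \<omega> \<in> carrier_mat n m" for \<omega>
    by (rule smult_carrier_mat[OF mat_measurable_carrier[OF F]])
next
  fix i j assume ij: "i < n" "j < m"
  have "(\<lambda>\<omega>. (c \<cdot>\<^sub>m F \<omega>) $$ (i, j)) = (\<lambda>\<omega>. c * F \<omega> $$ (i, j))"
    using ij by (simp add: carrier_matD[OF mat_measurable_carrier[OF F]])
  then show "(\<lambda>\<omega>. (c \<cdot>\<^sub>m F \<omega>) $$ (i, j)) \<in> borel_measurable P"
    using ij by (simp add: borel_measurable_times mat_measurable_entry[OF F])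
qed

lemma mat_measurable_transpose:
  assumes F: "mat_measurable P n m F"
  shows "mat_measurable P m n (\<lambda>\<omega>. transpose_mat (F \<omega>))"
proof (rule mat_measurableI)
  show "transpose_mat (F \<omega>) \<in> carrier_mat m n" for \<omega>
    using mat_measurable_carrier[OF F] by simp
next
  fix i j assume ij: "i < m" "j < n"
  have "(\<lambda>\<omega>. transpose_mat (F \<omega>) $$ (i, j)) = (\<lambda>\<omega>. F \<omega> $$ (j, i))"
    using ij by (simp add: carrier_matD[OF mat_measurable_carrier[OF F]])
  then show "(\<lambda>\<omega>. transpose_mat (F \<omega>) $$ (i, j)) \<in> borel_measurable P"
    using ij by (simp add: mat_measurable_entry[OF F])
qed

lemma mat_measurable_mult:
  assumes F: "mat_measurable P n k F" and G: "mat_measurable P k m G"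
  shows "mat_measurable P n m (\<lambda>\<omega>. F \<omega> * G \<omega>)"
proof (rule mat_measurableI)
  show "F \<omega> * G \<omega> \<in> carrier_mat n m" for \<omega>
    by (rule mult_carrier_mat[OF mat_measurable_carrier[OF F] mat_measurable_carrier[OF G]])
next
  fix i j assume ij: "i < n" "j < m"
  have entry: "(\<lambda>\<omega>. (F \<omega> * G \<omega>) $$ (i, j)) = (\<lambda>\<omega>. \<Sum>l<k. F \<omega> $$ (i, l) * G \<omega> $$ (l, j))"
    using ij by (simp add: index_mult_mat_sum carrier_matD[OF mat_measurable_carrier[OF F]]
        carrier_matD[OF mat_measurable_carrier[OF G]] del: index_mult_mat(1))
  show "(\<lambda>\<omega>. (F \<omega> * G \<omega>) $$ (i, j)) \<in> borel_measurable P"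
    unfolding entry
    by (intro borel_measurable_sum borel_measurable_times mat_measurable_entry[OF F] mat_measurable_entry[OF G])
      (use ij in auto)
qed

lemma borel_measurable_fro_norm:
  assumes F: "mat_measurable P n m F"
  shows "(\<lambda>\<omega>. fro_norm (F \<omega>)) \<in> borel_measurable P"
proof -
  have "(\<lambda>\<omega>. fro_norm (F \<omega>)) = (\<lambda>\<omega>. sqrt (\<Sum>i<n. \<Sum>j<m. (F \<omega> $$ (i, j))\<^sup>2))"
    unfolding fro_norm_def by (simp add: carrier_matD[OF mat_measurable_carrier[OF F]])
  also have "\<dots> \<in> borel_measurable P"
    by (intro measurable_compose[OF _ borel_measurable_sqrt] borel_measurable_sum borel_measurable_power
        mat_measurable_entry[OF F]) auto
  finally show ?thesis .
qed

lemma mat_measurable_mf_gd: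
  assumes U: "mat_measurable P d1 r U0" and V: "mat_measurable P d2 r V0" and M: "M \<in> carrier_mat d1 d2"
  shows "mat_measurable P d1 r (\<lambda>\<omega>. fst (mf_gd M r \<epsilon> (U0 \<omega>) (V0 \<omega>) t))
       \<and> mat_measurable P d2 r (\<lambda>\<omega>. snd (mf_gd M r \<epsilon> (U0 \<omega>) (V0 \<omega>) t))"
proof (induction t)
  case 0
  then show ?case using U V by simp
next
  case (Suc t)
  let ?U = "\<lambda>\<omega>. fst (mf_gd M r \<epsilon> (U0 \<omega>) (V0 \<omega>) t)" and ?V = "\<lambda>\<omega>. snd (mf_gd M r \<epsilon> (U0 \<omega>) (V0 \<omega>) t)"
  have U: "mat_measurable P d1 r ?U" and V: "mat_measurable P d2 r ?V" using Suc by auto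
  have R: "mat_measurable P d1 d2 (\<lambda>\<omega>. residual M (?U \<omega>) (?V \<omega>))"
    unfolding residual_def by (intro mat_measurable_diff mat_measurable_mult[OF U] mat_measurable_transpose V mat_measurable_const M)
  show ?case
    unfolding mf_gd_Suc_gd_update gd_update_def fst_conv snd_conv
    by (intro conjI mat_measurable_diff mat_measurable_smult mat_measurable_mult[OF R V]
        mat_measurable_mult[OF mat_measurable_transpose[OF R] U] U V)
qed

lemma sets_mf_gd_well_behaved:
  assumes U0: "mat_measurable P d1 r U0" and V0: "mat_measurable P d2 r V0" and M: "M \<in> carrier_mat d1 d2"
  shows "{\<omega> \<in> space P. mf_gd_well_behaved M r \<epsilon> (U0 \<omega>) (V0 \<omega>)} \<in> sets P"
proof -
  have U: "mat_measurable P d1 r (\<lambda>\<omega>. fst (mf_gd M r \<epsilon> (U0 \<omega>) (V0 \<omega>) t))"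
    and V: "mat_measurable P d2 r (\<lambda>\<omega>. snd (mf_gd M r \<epsilon> (U0 \<omega>) (V0 \<omega>) t))" for t
    using mat_measurable_mf_gd[OF U0 V0 M] by auto
  have obj: "(\<lambda>\<omega>. mf_obj M (fst (mf_gd M r \<epsilon> (U0 \<omega>) (V0 \<omega>) t)) (snd (mf_gd M r \<epsilon> (U0 \<omega>) (V0 \<omega>) t)))
      \<in> borel_measurable P" for t
    unfolding mf_obj_def
    by (intro borel_measurable_divide borel_measurable_power borel_measurable_fro_norm[where n = d1 and m = d2]
        mat_measurable_diff mat_measurable_mult[OF U] mat_measurable_transpose[OF V] mat_measurable_const M)
      simp
  show ?thesis
    unfolding mf_gd_well_behaved_def Let_def
    by (intro sets.sets_Collect_conj sets.sets_Collect_countable_All borel_measurable_le obj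
        borel_measurable_fro_norm[where n = r and m = r] borel_measurable_power borel_measurable_fro_norm[OF U]
        borel_measurable_fro_norm[OF V] mat_measurable_diff mat_measurable_mult[OF mat_measurable_transpose[OF U] U]
        mat_measurable_mult[OF mat_measurable_transpose[OF V] V] borel_measurable_const)
qed

section \<open>Gaussian initialisation\<close>

lemma prob_space_gauss_init: "\<sigma> > 0 \<Longrightarrow> prob_space (gauss_init d1 d2 r \<sigma>)"
  unfolding gauss_init_def by (intro prob_space_PiM prob_space_normal_density)

lemma measurable_gauss_init_component:
  assumes "x \<in> init_index d1 d2 r"
  shows "(\<lambda>\<omega>. \<omega> x) \<in> measurable (gauss_init d1 d2 r \<sigma>) (density lborel (normal_density 0 \<sigma>))"
  unfolding gauss_init_def by (rule measurable_component_singleton[OF assms])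

lemma borel_measurable_gauss_init_component:
  assumes "x \<in> init_index d1 d2 r"
  shows "(\<lambda>\<omega>. \<omega> x) \<in> borel_measurable (gauss_init d1 d2 r \<sigma>)"
proof -
  have "sets (density lborel (normal_density 0 \<sigma>)) = sets borel" by simp
  then show ?thesis using measurable_gauss_init_component[OF assms] measurable_cong_sets[OF refl] by blast
qed

lemma integral_gauss_init_component_square:
  assumes \<sigma>: "\<sigma> > 0" and x: "x \<in> init_index d1 d2 r"
  shows "integrable (gauss_init d1 d2 r \<sigma>) (\<lambda>\<omega>. (\<omega> x)\<^sup>2)"
    and "integral\<^sup>L (gauss_init d1 d2 r \<sigma>) (\<lambda>\<omega>. (\<omega> x)\<^sup>2) = \<sigma>\<^sup>2"
proof -
  let ?N = "density lborel (normal_density 0 \<sigma>)"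
  have N: "has_bochner_integral lborel (\<lambda>y. normal_density 0 \<sigma> y *\<^sub>R y\<^sup>2) (\<sigma>\<^sup>2)"
    using normal_moment_even[OF \<sigma>, where k = 1 and \<mu> = 0] \<sigma> by (simp add: power2_eq_square field_simps)
  have int_N: "integrable ?N (\<lambda>y. y\<^sup>2)" "integral\<^sup>L ?N (\<lambda>y. y\<^sup>2) = \<sigma>\<^sup>2"
    using integrable.intros[OF N] has_bochner_integral_integral_eq[OF N]
    by (simp_all add: integrable_density integral_density)
  have distr: "distr (gauss_init d1 d2 r \<sigma>) ?N (\<lambda>\<omega>. \<omega> x) = ?N"
    unfolding gauss_init_def by (rule distr_PiM_component[OF prob_space_normal_density[OF \<sigma>] x])
  have sq: "(\<lambda>y::real. y\<^sup>2) \<in> borel_measurable ?N" by simp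
  show "integrable (gauss_init d1 d2 r \<sigma>) (\<lambda>\<omega>. (\<omega> x)\<^sup>2)"
    using integrable_distr_eq[OF measurable_gauss_init_component[OF x] sq] distr int_N by simp
  show "integral\<^sup>L (gauss_init d1 d2 r \<sigma>) (\<lambda>\<omega>. (\<omega> x)\<^sup>2) = \<sigma>\<^sup>2"
    using integral_distr[OF measurable_gauss_init_component[OF x] sq] distr int_N by simp
qed

lemma prob_sum_squares_less_ge:
  fixes d1 d2 r :: nat
  assumes \<sigma>: "\<sigma> > 0" and c: "c > 0"
  defines "P \<equiv> gauss_init d1 d2 r \<sigma>" and "I \<equiv> init_index d1 d2 r"
  shows "measure P {\<omega> \<in> space P. (\<Sum>x\<in>I. (\<omega> x)\<^sup>2) < c} \<ge> 1 - real (card I) * \<sigma>\<^sup>2 / c"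
proof -
  interpret prob_space P unfolding P_def by (rule prob_space_gauss_init[OF \<sigma>])
  let ?u = "\<lambda>\<omega>. \<Sum>x\<in>I. (\<omega> x)\<^sup>2"
  have "?u \<in> borel_measurable P"
    unfolding P_def I_def by (intro borel_measurable_sum borel_measurable_power borel_measurable_gauss_init_component)
  then have A: "{\<omega> \<in> space P. c \<le> ?u \<omega>} \<in> events" by measurable
  have "integrable P ?u" unfolding P_def I_def
    by (intro Bochner_Integration.integrable_sum integral_gauss_init_component_square(1)[OF \<sigma>])
  then have "prob {\<omega> \<in> space P. c \<le> ?u \<omega>} \<le> integral\<^sup>L P ?u / c"
    by (rule integral_Markov_inequality_measure[OF _ A]) (use c in \<open>auto intro!: sum_nonneg\<close>)
  also have "integral\<^sup>L P ?u = real (card I) * \<sigma>\<^sup>2"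
    unfolding P_def I_def using integral_gauss_init_component_square[OF \<sigma>]
    by (subst Bochner_Integration.integral_sum) auto
  finally have "prob {\<omega> \<in> space P. c \<le> ?u \<omega>} \<le> real (card I) * \<sigma>\<^sup>2 / c" .
  moreover have "{\<omega> \<in> space P. ?u \<omega> < c} = space P - {\<omega> \<in> space P. c \<le> ?u \<omega>}" by auto
  ultimately show ?thesis using prob_compl[OF A] by simp
qed

lemma card_init_index_le: "card (init_index d1 d2 r) \<le> d1 * r + d2 * r"
proof -
  have "card (init_index d1 d2 r) \<le> card (Inl ` ({..<d1} \<times> {..<r}) :: ((nat \<times> nat) + (nat \<times> nat)) set)
      + card (Inr ` ({..<d2} \<times> {..<r}) :: ((nat \<times> nat) + (nat \<times> nat)) set)"
    unfolding init_index_def by (rule card_Un_le)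
  also have "\<dots> \<le> card ({..<d1} \<times> {..<r}) + card ({..<d2} \<times> {..<r})"
    by (intro add_mono card_image_le) auto
  finally show ?thesis by (simp add: card_cartesian_product)
qed

lemma power2_fro_norm_init:
  "(fro_norm (init_U d1 r \<omega>))\<^sup>2 + (fro_norm (init_V d2 r \<omega>))\<^sup>2 = (\<Sum>x\<in>init_index d1 d2 r. (\<omega> x)\<^sup>2)"
proof -
  have "(\<Sum>x\<in>init_index d1 d2 r. (\<omega> x)\<^sup>2)
     = (\<Sum>x\<in>Inl ` ({..<d1} \<times> {..<r}). (\<omega> x)\<^sup>2) + (\<Sum>x\<in>Inr ` ({..<d2} \<times> {..<r}). (\<omega> x)\<^sup>2)"
    unfolding init_index_def by (rule sum.union_disjoint) auto
  also have "\<dots> = (\<Sum>p\<in>{..<d1} \<times> {..<r}. (\<omega> (Inl p))\<^sup>2) + (\<Sum>p\<in>{..<d2} \<times> {..<r}. (\<omega> (Inr p))\<^sup>2)"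
    by (simp add: sum.reindex)
  finally show ?thesis
    unfolding fro_norm_def init_U_def init_V_def by (simp add: sum_nonneg sum.cartesian_product case_prod_beta)
qed

lemma mat_measurable_init_U: "mat_measurable (gauss_init d1 d2 r \<sigma>) d1 r (init_U d1 r)"
proof (rule mat_measurableI)
  show "init_U d1 r \<omega> \<in> carrier_mat d1 r" for \<omega> by (simp add: init_U_def)
next
  fix i j assume "i < d1" "j < r"
  then have "(\<lambda>\<omega>. init_U d1 r \<omega> $$ (i, j)) = (\<lambda>\<omega>. \<omega> (Inl (i, j)))" "Inl (i, j) \<in> init_index d1 d2 r"
    by (auto simp: init_U_def init_index_def)
  then show "(\<lambda>\<omega>. init_U d1 r \<omega> $$ (i, j)) \<in> borel_measurable (gauss_init d1 d2 r \<sigma>)"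
    using borel_measurable_gauss_init_component by metis
qed

lemma mat_measurable_init_V: "mat_measurable (gauss_init d1 d2 r \<sigma>) d2 r (init_V d2 r)"
proof (rule mat_measurableI)
  show "init_V d2 r \<omega> \<in> carrier_mat d2 r" for \<omega> by (simp add: init_V_def)
next
  fix i j assume "i < d2" "j < r"
  then have "(\<lambda>\<omega>. init_V d2 r \<omega> $$ (i, j)) = (\<lambda>\<omega>. \<omega> (Inr (i, j)))" "Inr (i, j) \<in> init_index d1 d2 r"
    by (auto simp: init_V_def init_index_def)
  then show "(\<lambda>\<omega>. init_V d2 r \<omega> $$ (i, j)) \<in> borel_measurable (gauss_init d1 d2 r \<sigma>)"
    using borel_measurable_gauss_init_component by metis
qed

lemma prob_mf_gd_well_behaved_ge:
  fixes M :: "real mat" and r :: nat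
  assumes M: "M \<in> carrier_mat d1 d2" and \<epsilon>: "0 < \<epsilon>" "\<epsilon> < fro_norm M" and \<sigma>: "\<sigma> > 0"
  defines "P \<equiv> gauss_init d1 d2 r \<sigma>"
  shows "measure P {\<omega> \<in> space P. mf_gd_well_behaved M r \<epsilon> (init_U d1 r \<omega>) (init_V d2 r \<omega>)}
    \<ge> 1 - real (card (init_index d1 d2 r)) * \<sigma>\<^sup>2 / (\<epsilon> / 4)"
proof -
  interpret prob_space P unfolding P_def by (rule prob_space_gauss_init[OF \<sigma>])
  have "{\<omega> \<in> space P. (\<Sum>x\<in>init_index d1 d2 r. (\<omega> x)\<^sup>2) < \<epsilon> / 4}
      \<subseteq> {\<omega> \<in> space P. mf_gd_well_behaved M r \<epsilon> (init_U d1 r \<omega>) (init_V d2 r \<omega>)}"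
  proof (intro subsetI CollectI conjI)
    fix \<omega> assume \<omega>: "\<omega> \<in> {\<omega> \<in> space P. (\<Sum>x\<in>init_index d1 d2 r. (\<omega> x)\<^sup>2) < \<epsilon> / 4}"
    then show "\<omega> \<in> space P" by simp
    have "init_U d1 r \<omega> \<in> carrier_mat d1 r" "init_V d2 r \<omega> \<in> carrier_mat d2 r"
      by (simp_all add: init_U_def init_V_def)
    moreover have "(fro_norm (init_U d1 r \<omega>))\<^sup>2 + (fro_norm (init_V d2 r \<omega>))\<^sup>2 \<le> \<epsilon> / 4"
      using \<omega> power2_fro_norm_init[of d1 r \<omega> d2] by simp
    ultimately show "mf_gd_well_behaved M r \<epsilon> (init_U d1 r \<omega>) (init_V d2 r \<omega>)"
      by (rule mf_gd_well_behaved_if_small_init[OF M _ _ \<epsilon>])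
  qed
  moreover have "{\<omega> \<in> space P. mf_gd_well_behaved M r \<epsilon> (init_U d1 r \<omega>) (init_V d2 r \<omega>)} \<in> events"
    unfolding P_def by (rule sets_mf_gd_well_behaved[OF mat_measurable_init_U mat_measurable_init_V M])
  ultimately have "prob {\<omega> \<in> space P. (\<Sum>x\<in>init_index d1 d2 r. (\<omega> x)\<^sup>2) < \<epsilon> / 4}
      \<le> prob {\<omega> \<in> space P. mf_gd_well_behaved M r \<epsilon> (init_U d1 r \<omega>) (init_V d2 r \<omega>)}"
    by (rule finite_measure_mono)
  moreover have "\<epsilon> / 4 > 0" using \<epsilon> by simp
  ultimately show ?thesis using prob_sum_squares_less_ge[OF \<sigma>, of "\<epsilon> / 4" d1 d2 r] unfolding P_def by linarith
qed

lemma init_failure_bound_le: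
  fixes C \<epsilon> :: real and N d k :: nat
  assumes C: "C \<ge> 8" and k: "k \<ge> 3" and d: "d \<ge> 1" and N: "real N \<le> 2 * real d ^ 2" and \<epsilon>: "\<epsilon> > 0"
  shows "real N * (\<epsilon> / (C * real d ^ k)) / (\<epsilon> / 4) \<le> 1 / real d"
proof -
  have Cd: "8 * real d ^ 3 \<le> C * real d ^ k" "0 < 8 * real d ^ 3"
    using C d k by (auto intro!: mult_mono power_increasing)
  then have "real N * (\<epsilon> / (C * real d ^ k)) / (\<epsilon> / 4) = 4 * real N / (C * real d ^ k)"
    using \<epsilon> by (simp add: field_simps)
  also have "\<dots> \<le> 4 * (2 * real d ^ 2) / (8 * real d ^ 3)"
    using N Cd by (intro frac_le) auto
  also have "\<dots> = 1 / real d" using d by (simp add: power2_eq_square power3_eq_cube)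
  finally show ?thesis .
qed

lemma prob_mf_gd_well_behaved_ge_1_minus_inverse_dim:
  fixes M :: "real mat" and C \<epsilon> :: real and k r :: nat
  assumes C: "C \<ge> 8" and k: "k \<ge> 3" and M: "M \<in> carrier_mat d1 d2" and rank: "vec_space.rank d1 M = r"
    and \<epsilon>: "0 < \<epsilon>" "\<epsilon> < fro_norm M"
  defines "\<sigma> \<equiv> sqrt (\<epsilon> / (C * real (max d1 d2) ^ k))"
  shows "prob_space (gauss_init d1 d2 r \<sigma>) \<and>
    measure (gauss_init d1 d2 r \<sigma>) {\<omega> \<in> space (gauss_init d1 d2 r \<sigma>).
      mf_gd_well_behaved M r \<epsilon> (init_U d1 r \<omega>) (init_V d2 r \<omega>)} \<ge> 1 - 1 / real (max d1 d2)"
proof -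
  let ?d = "max d1 d2"
  have d: "?d \<ge> 1" using fro_norm_pos_imp_dims_pos[OF M] \<epsilon> by (auto simp: le_max_iff_disj)
  then have \<sigma>: "\<sigma> > 0" "\<sigma>\<^sup>2 = \<epsilon> / (C * real ?d ^ k)" using C \<epsilon> by (simp_all add: \<sigma>_def)
  have "card (init_index d1 d2 r) \<le> ?d * ?d + ?d * ?d"
    using card_init_index_le[of d1 d2 r] vec_space.rank_le_nc[OF M] rank
    by (smt (verit) add_mono le_trans max.cobounded1 max.cobounded2 mult_le_mono)
  then have "real (card (init_index d1 d2 r)) \<le> 2 * real ?d ^ 2"
    by (simp add: power2_eq_square flip: of_nat_mult of_nat_add of_nat_le_iff)
  then have "1 - real (card (init_index d1 d2 r)) * \<sigma>\<^sup>2 / (\<epsilon> / 4) \<ge> 1 - 1 / real ?d"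
    unfolding \<sigma>(2) using init_failure_bound_le[OF C k d _ \<epsilon>(1)] by simp
  then show ?thesis
    using prob_space_gauss_init[OF \<sigma>(1)] prob_mf_gd_well_behaved_ge[OF M \<epsilon> \<sigma>(1), of r] by simp
qed

theorem lemma3p1:
  "\<exists>C0 k0. C0 > 0 \<and>
    (\<forall>C k d1 d2 r (M :: real mat) \<epsilon>.
       C \<ge> C0 \<longrightarrow> k \<ge> k0 \<longrightarrow>
       M \<in> carrier_mat d1 d2 \<longrightarrow> vec_space.rank d1 M = r \<longrightarrow>
       0 < \<epsilon> \<longrightarrow> \<epsilon> < fro_norm M \<longrightarrow>
       (let d = max d1 d2;
            \<sigma> = sqrt (\<epsilon> / (C * real d ^ k));
            P = gauss_init d1 d2 r \<sigma>;
            it = (\<lambda>\<omega> t. mf_gd M r \<epsilon> (init_U d1 r \<omega>) (init_V d2 r \<omega>) t)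
        in prob_space P \<and>
           measure P {\<omega> \<in> space P.
              (\<forall>t. fro_norm (transpose_mat (fst (it \<omega> t)) * fst (it \<omega> t)
                              - transpose_mat (snd (it \<omega> t)) * snd (it \<omega> t)) \<le> \<epsilon>)
            \<and> (\<forall>t. mf_obj M (fst (it \<omega> (Suc t))) (snd (it \<omega> (Suc t)))
                      \<le> mf_obj M (fst (it \<omega> t)) (snd (it \<omega> t)))
            \<and> mf_obj M (fst (it \<omega> 0)) (snd (it \<omega> 0)) \<le> 2 * (fro_norm M)\<^sup>2
            \<and> (\<forall>t. (fro_norm (fst (it \<omega> t)))\<^sup>2 \<le> 5 * sqrt (real r) * fro_norm M
                 \<and> (fro_norm (snd (it \<omega> t)))\<^sup>2 \<le> 5 * sqrt (real r) * fro_norm M)}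
           \<ge> 1 - 1 / real d))"
  unfolding Let_def
  by (intro exI[of _ "8::real"] exI[of _ "3::nat"] conjI[OF zero_less_numeral] allI impI
      prob_mf_gd_well_behaved_ge_1_minus_inverse_dim[unfolded mf_gd_well_behaved_def Let_def])

end
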